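(* Let $f\in C(\mathbb{R}^4)$, $f=f(r,\tau,u,t)$, be bounded, $\kappa$-Lipschitz, $1$-periodic in $r$ and $\tau$, and non-increasing in $u$. Let $\bar f(u_0,t_0)$ be the constant with $\lim_{\varepsilon\to0}u^\varepsilon(t;c,u_0,t_0)=c+\bar f(u_0,t_0)t$, where $u^\varepsilon(\cdot;c,u_0,t_0)$ solves $\dot u^\varepsilon=f(u^\varepsilon/\varepsilon,t/\varepsilon,u_0,t_0)$, $u^\varepsilon(0)=c$. Let $\overline u(t;c)$ be the solution of $\dot{\overline u}=\bar f(\overline u,t)$, $\overline u(0)=c$, and $u^\varepsilon(t;c)$ the solution of $\dot u^\varepsilon=f(u^\varepsilon/\varepsilon,t/\varepsilon,u^\varepsilon,t)$, $u^\varepsilon(0)=c$. Then for all $t>0$ and $c\in\mathbb{R}$, $|u^\varepsilon(t;c)-\overline u(t;c)|\le 2\|f\|_\infty t$. *)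

theory Defs
  imports "HOL-Analysis.Analysis"
begin

definition solves_ivp :: "(real \<Rightarrow> real) \<Rightarrow> (real \<Rightarrow> real \<Rightarrow> real) \<Rightarrow> real \<Rightarrow> bool" where
  "solves_ivp y F c \<longleftrightarrow> y 0 = c \<and>
     (\<forall>s\<ge>0. (y has_real_derivative F s (y s)) (at s within {0..}))"

definition sup_norm4 :: "(real \<Rightarrow> real \<Rightarrow> real \<Rightarrow> real \<Rightarrow> real) \<Rightarrow> real" where
  "sup_norm4 f = (SUP x\<in>(UNIV :: (real \<times> real \<times> real \<times> real) set).
                    \<bar>case x of (r, \<tau>, u, t) \<Rightarrow> f r \<tau> u t\<bar>)"

end

theory Submission
  imports Defs
begin

text \<open>
  Both \<open>u\<close> and \<open>ubar\<close> start at \<open>c\<close> and move with speed at most \<open>\<parallel>f\<parallel>\<^sub>\<infinity>\<close>. For \<open>u\<close> this is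
  immediate, since its slope is a value of \<open>f\<close>. For \<open>ubar\<close>, each \<open>fbar u\<^sub>0 t\<^sub>0\<close> is the limit of
  the values at time 1 of solutions, started at 0, of the frozen equation
  \<open>y' = f (y/\<epsilon>) (s/\<epsilon>) u\<^sub>0 t\<^sub>0\<close>, and these are bounded by \<open>\<parallel>f\<parallel>\<^sub>\<infinity>\<close> in absolute value.
  The only real work is to show that these frozen solutions exist at all, which is done by
  Picard iteration in a weighted sup norm on \<open>[0, \<infinity>)\<close>.
\<close>

lemma has_real_derivative_integral_from_0:
  fixes h :: "real \<Rightarrow> real"
  assumes h: "continuous_on UNIV h" and s: "s \<ge> 0"
  shows "((\<lambda>x. integral {0..x} h) has_real_derivative h s) (at s within {0..})"
proof -
  have "((\<lambda>x. integral {0..x} h) has_vector_derivative h s) (at s within {0..s+1})"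
    by (rule integral_has_vector_derivative) (use h s continuous_on_subset in auto)
  moreover have "at s within {0..s+1} = at s within {0..}"
    by (rule at_within_nhd[where S="{-1<..<s+1}"]) (use s in auto)
  ultimately show ?thesis
    by (simp add: has_real_derivative_iff_has_vector_derivative)
qed

lemma continuous_on_integral_from_0:
  fixes h :: "real \<Rightarrow> real"
  assumes h: "continuous_on UNIV h"
  shows "continuous_on UNIV (\<lambda>x. integral {0..max 0 x} h)"
proof -
  have "continuous_on {0..} (\<lambda>x. integral {0..x} h)"
    unfolding continuous_on_eq_continuous_within
    using has_real_derivative_integral_from_0[OF h] DERIV_continuous by (auto simp: atLeast_def) blast
  then show ?thesis
    by (rule continuous_on_compose2[where f="\<lambda>x. max 0 x"]) (auto intro: continuous_intros)
qed

lemma continuous_on_compose_curried: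
  assumes g: "continuous_on UNIV (\<lambda>(r, x). g r x)" and y: "continuous_on UNIV y"
  shows "continuous_on UNIV (\<lambda>r. g r (y r))"
proof -
  have "continuous_on UNIV (\<lambda>r. (\<lambda>(r, x). g r x) (r, y r))"
    by (rule continuous_on_compose2[OF g]) (auto intro!: continuous_intros y)
  then show ?thesis by simp
qed

lemma solves_ivp_if_integral_equation:
  assumes g: "continuous_on UNIV (\<lambda>r. g r (y r))"
    and y: "\<And>s. s \<ge> 0 \<Longrightarrow> y s = c + integral {0..s} (\<lambda>r. g r (y r))"
  shows "solves_ivp y g c"
  unfolding solves_ivp_def
proof (intro conjI allI impI)
  show "y 0 = c" using y[of 0] by simp
  fix s :: real assume s: "s \<ge> 0"
  have "((\<lambda>x. c + integral {0..x} (\<lambda>r. g r (y r))) has_real_derivative g s (y s)) (at s within {0..})"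
    using has_real_derivative_integral_from_0[OF g s] by (auto intro!: derivative_eq_intros)
  then show "(y has_real_derivative g s (y s)) (at s within {0..})"
    by (rule has_field_derivative_transform_within[where d=1]) (use s y in auto)
qed

lemma solves_ivp_displacement_le:
  assumes y: "solves_ivp y g c" and g: "\<And>s x. \<bar>g s x\<bar> \<le> M" and s: "s \<ge> 0"
  shows "\<bar>y s - c\<bar> \<le> M * s"
proof -
  have "norm (y s - y 0) \<le> M * norm (s - 0)"
  proof (rule field_differentiable_bound[where S="{0..s}"])
    fix z assume z: "z \<in> {0..s}"
    then show "(y has_field_derivative g z (y z)) (at z within {0..s})"
      using y unfolding solves_ivp_def by (auto intro: DERIV_subset)
    show "norm (g z (y z)) \<le> M" using g by simp
  qed (use s in auto)
  then show ?thesis using y s by (simp add: solves_ivp_def)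
qed

lemma exp_weighted_integral_le:
  fixes h :: "real \<Rightarrow> real"
  assumes h: "continuous_on {0..s} h" and s: "s \<ge> 0" and K: "K > 0" and B: "B \<ge> 0"
    and h_le: "\<And>r. r \<in> {0..s} \<Longrightarrow> \<bar>h r\<bar> \<le> B * exp (K * r)"
  shows "exp (- K * s) * \<bar>integral {0..s} h\<bar> \<le> B / K"
proof -
  have "((\<lambda>r. B * exp (K * r)) has_integral B / K * exp (K * s) - B / K * exp (K * 0)) {0..s}"
    by (rule fundamental_theorem_of_calculus[OF s])
      (use K in \<open>auto simp: has_real_derivative_iff_has_vector_derivative[symmetric]
                      intro!: derivative_eq_intros\<close>)
  then have "integral {0..s} (\<lambda>r. B * exp (K * r)) = B / K * exp (K * s) - B / K * exp (K * 0)"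
    by (rule integral_unique)
  then have integral_exp: "integral {0..s} (\<lambda>r. B * exp (K * r)) = B / K * exp (K * s) - B / K"
    by simp
  have "norm (integral {0..s} h) \<le> integral {0..s} (\<lambda>r. B * exp (K * r))"
    by (rule integral_norm_bound_integral)
      (use h h_le in \<open>auto intro!: integrable_continuous_interval continuous_intros\<close>)
  then have "\<bar>integral {0..s} h\<bar> \<le> integral {0..s} (\<lambda>r. B * exp (K * r))"
    by simp
  also have "\<dots> \<le> B / K * exp (K * s)"
    using integral_exp B K by simp
  finally have "exp (- K * s) * \<bar>integral {0..s} h\<bar> \<le> exp (- K * s) * (B / K * exp (K * s))"
    by (intro mult_left_mono) auto
  also have "\<dots> = B / K"
    by (simp add: mult.commute mult.left_commute exp_minus_inverse)
  finally show ?thesis .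
qed

text \<open>
  A fixed point \<open>w\<close> of \<open>weighted_picard K g c\<close> yields the solution \<open>c + exp (K * s) * w s\<close>
  of \<open>y' = g s y, y 0 = c\<close>. The weight \<open>exp (- K * s)\<close> makes the map a contraction for the sup
  norm on all of \<open>[0, \<infinity>)\<close> once \<open>K\<close> is at least twice the Lipschitz constant of \<open>g\<close>.
\<close>
definition weighted_picard ::
    "real \<Rightarrow> (real \<Rightarrow> real \<Rightarrow> real) \<Rightarrow> real \<Rightarrow> (real \<Rightarrow> real) \<Rightarrow> real \<Rightarrow> real" where
  "weighted_picard K g c w s =
     exp (- K * s) * integral {0..max 0 s} (\<lambda>r. g r (c + exp (K * r) * w r))"

lemma weighted_picard_bcontfun:
  assumes g: "continuous_on UNIV (\<lambda>(r, x). g r x)" and g_le: "\<And>r x. \<bar>g r x\<bar> \<le> M"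
    and K: "K > 0" and w: "continuous_on UNIV w"
  shows "weighted_picard K g c w \<in> bcontfun"
proof (rule bcontfun_normI)
  have gw: "continuous_on UNIV (\<lambda>r. g r (c + exp (K * r) * w r))"
    by (rule continuous_on_compose_curried[OF g]) (auto intro!: continuous_intros w)
  then show "continuous_on UNIV (weighted_picard K g c w)"
    unfolding weighted_picard_def[abs_def]
    by (auto intro!: continuous_intros continuous_on_integral_from_0)
  fix s
  have "M \<ge> 0" using g_le[of 0 0] by linarith
  show "norm (weighted_picard K g c w s) \<le> M / K"
  proof (cases "s \<ge> 0")
    case True
    have "M \<le> M * exp (K * r)" if "r \<ge> 0" for r
      using mult_left_mono[of 1 "exp (K * r)" M] \<open>M \<ge> 0\<close> K that by simp
    then have "exp (- K * s) * \<bar>integral {0..s} (\<lambda>r. g r (c + exp (K * r) * w r))\<bar> \<le> M / K"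
      by (intro exp_weighted_integral_le continuous_on_subset[OF gw] True K \<open>M \<ge> 0\<close>)
        (auto intro: order_trans[OF g_le])
    then show ?thesis
      using True by (simp add: weighted_picard_def abs_mult)
  qed (use \<open>M \<ge> 0\<close> K in \<open>simp add: weighted_picard_def\<close>)
qed

lemma weighted_picard_dist_le:
  assumes g: "continuous_on UNIV (\<lambda>(r, x). g r x)"
    and g_lip: "\<And>r x1 x2. \<bar>g r x1 - g r x2\<bar> \<le> L * \<bar>x1 - x2\<bar>"
    and L: "L \<ge> 0" and K: "K > 0" "2 * L \<le> K"
    and w: "continuous_on UNIV w1" "continuous_on UNIV w2" and D: "\<And>r. \<bar>w1 r - w2 r\<bar> \<le> D"
  shows "\<bar>weighted_picard K g c w1 s - weighted_picard K g c w2 s\<bar> \<le> D / 2"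
proof -
  define H where "H w = (\<lambda>r. g r (c + exp (K * r) * w r))" for w :: "real \<Rightarrow> real"
  have H_cont: "continuous_on UNIV (H w)" if "continuous_on UNIV w" for w
    unfolding H_def by (rule continuous_on_compose_curried[OF g]) (auto intro!: continuous_intros that)
  have "D \<ge> 0" using D[of 0] by linarith
  have H_diff_le: "\<bar>H w1 r - H w2 r\<bar> \<le> L * D * exp (K * r)" for r
  proof -
    have "\<bar>H w1 r - H w2 r\<bar> \<le> L * (exp (K * r) * \<bar>w1 r - w2 r\<bar>)"
      using g_lip[of r "c + exp (K * r) * w1 r" "c + exp (K * r) * w2 r"]
      by (simp add: H_def abs_mult right_diff_distrib[symmetric])
    also have "\<dots> \<le> L * (exp (K * r) * D)"
      using D L by (intro mult_left_mono) auto
    finally show ?thesis by (simp add: algebra_simps)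
  qed
  show ?thesis
  proof (cases "s \<ge> 0")
    case True
    have "exp (- K * s) * \<bar>integral {0..s} (\<lambda>r. H w1 r - H w2 r)\<bar> \<le> L * D / K"
      by (rule exp_weighted_integral_le)
        (use True K L \<open>D \<ge> 0\<close> H_diff_le in
          \<open>auto intro!: continuous_intros continuous_on_subset[OF H_cont] w\<close>)
    also have "\<dots> \<le> D / 2"
      using K \<open>D \<ge> 0\<close> by (simp add: field_simps mult_left_mono)
    also have "integral {0..s} (\<lambda>r. H w1 r - H w2 r) = integral {0..s} (H w1) - integral {0..s} (H w2)"
      by (intro integral_diff integrable_continuous_interval continuous_on_subset[OF H_cont] w) auto
    moreover have "weighted_picard K g c w s = exp (- K * s) * integral {0..s} (H w)" for w
      using True by (simp add: weighted_picard_def H_def)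
    ultimately show ?thesis
      by (simp add: abs_mult right_diff_distrib[symmetric])
  qed (use \<open>D \<ge> 0\<close> in \<open>simp add: weighted_picard_def\<close>)
qed

lemma solves_ivp_exists:
  assumes g: "continuous_on UNIV (\<lambda>(r, x). g r x)" and g_le: "\<And>r x. \<bar>g r x\<bar> \<le> M"
    and g_lip: "\<And>r x1 x2. \<bar>g r x1 - g r x2\<bar> \<le> L * \<bar>x1 - x2\<bar>" and L: "L \<ge> 0"
  shows "\<exists>y. solves_ivp y g c"
proof -
  define K where "K = 2 * L + 1"
  have K: "K > 0" "2 * L \<le> K" using L by (auto simp: K_def)
  define \<Phi> where "\<Phi> w = Bcontfun (weighted_picard K g c w)" for w :: "real \<Rightarrow>\<^sub>C real"
  have \<Phi>: "apply_bcontfun (\<Phi> w) = weighted_picard K g c w" for w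
    unfolding \<Phi>_def by (rule Bcontfun_inverse weighted_picard_bcontfun[OF g g_le K(1)])+ simp
  have "dist (\<Phi> w1) (\<Phi> w2) \<le> 1/2 * dist w1 w2" for w1 w2
    using weighted_picard_dist_le[OF g g_lip L K, of w1 w2 "dist w1 w2"] dist_bounded[of w1 _ w2]
    by (intro dist_bound) (simp add: \<Phi> dist_real_def)
  then obtain w where w: "\<Phi> w = w"
    using banach_fix_type[of "1/2" \<Phi>] by auto
  define y where "y s = c + exp (K * s) * w s" for s
  have y_cont: "continuous_on UNIV (\<lambda>r. g r (y r))"
    unfolding y_def by (rule continuous_on_compose_curried[OF g]) (auto intro!: continuous_intros)
  have y_eq: "y s = c + integral {0..s} (\<lambda>r. g r (y r))" if "s \<ge> 0" for s
  proof -
    have "w s = weighted_picard K g c w s" using w \<Phi> by metis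
    then show ?thesis
      using that by (simp add: y_def weighted_picard_def mult.assoc[symmetric] exp_add[symmetric])
  qed
  have "solves_ivp y g c"
    by (rule solves_ivp_if_integral_equation[where g=g and y=y, OF y_cont y_eq])
  then show ?thesis by blast
qed

lemma solves_ivp_exists_rescaled:
  fixes f :: "real \<Rightarrow> real \<Rightarrow> real \<Rightarrow> real \<Rightarrow> real"
  assumes cont: "continuous_on UNIV (\<lambda>(r, \<tau>, v, s). f r \<tau> v s)"
    and lip: "\<kappa>-lipschitz_on UNIV (\<lambda>(r, \<tau>, v, s). f r \<tau> v s)"
    and f_le: "\<And>r \<tau> v s. \<bar>f r \<tau> v s\<bar> \<le> M" and e: "e > 0"
  shows "\<exists>y. solves_ivp y (\<lambda>s x. f (x / e) (s / e) u0 t0) c"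
proof (rule solves_ivp_exists)
  have "continuous_on UNIV ((\<lambda>(r, \<tau>, v, s). f r \<tau> v s) \<circ> (\<lambda>(s, x). (x / e, s / e, u0, t0)))"
    by (intro continuous_on_compose continuous_on_subset[OF cont])
      (use e in \<open>auto simp: case_prod_beta' intro!: continuous_intros\<close>)
  then show "continuous_on UNIV (\<lambda>(s, x). f (x / e) (s / e) u0 t0)"
    by (simp add: o_def case_prod_beta')
  show "\<bar>f (x / e) (s / e) u0 t0\<bar> \<le> M" for s x
    by (rule f_le)
  show "\<kappa> / e \<ge> 0"
    using lipschitz_on_nonneg[OF lip] e by simp
  fix s x1 x2 :: real
  have "dist (f (x1 / e) (s / e) u0 t0) (f (x2 / e) (s / e) u0 t0)
      \<le> \<kappa> * dist (x1 / e, s / e, u0, t0) (x2 / e, s / e, u0, t0)"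
    using lipschitz_onD[OF lip, of "(x1 / e, s / e, u0, t0)" "(x2 / e, s / e, u0, t0)"] by simp
  also have "dist (x1 / e, s / e, u0, t0) (x2 / e, s / e, u0, t0) = \<bar>x1 - x2\<bar> / e"
    using e by (simp add: dist_Pair_Pair dist_real_def diff_divide_distrib[symmetric])
  finally show "\<bar>f (x1 / e) (s / e) u0 t0 - f (x2 / e) (s / e) u0 t0\<bar> \<le> \<kappa> / e * \<bar>x1 - x2\<bar>"
    by (simp add: dist_real_def)
qed

lemma tendsto_solves_ivp_abs_le:
  fixes U :: "real \<Rightarrow> real \<Rightarrow> real"
  assumes U: "\<And>e. e > 0 \<Longrightarrow> solves_ivp (U e) (G e) 0" and G_le: "\<And>e s x. \<bar>G e s x\<bar> \<le> M"
    and lim: "((\<lambda>e. U e 1) \<longlongrightarrow> a) (at_right 0)"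
  shows "\<bar>a\<bar> \<le> M"
proof (rule tendsto_upperbound[OF tendsto_rabs[OF lim]])
  have U_le: "\<bar>U e 1\<bar> \<le> M" if "e > 0" for e
    using solves_ivp_displacement_le[OF U[OF that] G_le, of 1] by simp
  show "\<forall>\<^sub>F e in at_right 0. \<bar>U e 1\<bar> \<le> M"
    by (rule eventually_mono[OF eventually_at_right_less[of 0] U_le])
qed simp

lemma abs_le_sup_norm4:
  assumes "bounded (range (\<lambda>(r, \<tau>, v, s). f r \<tau> v s))"
  shows "\<bar>f r \<tau> v s\<bar> \<le> sup_norm4 f"
proof -
  obtain B where "\<And>x. norm ((\<lambda>(r, \<tau>, v, s). f r \<tau> v s) x) \<le> B"
    using assms unfolding bounded_iff by auto
  then have "bdd_above (range (\<lambda>x. \<bar>case x of (r, \<tau>, v, s) \<Rightarrow> f r \<tau> v s\<bar>))"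
    by (intro bdd_aboveI[where M=B]) (auto split: prod.splits)
  from cSUP_upper[OF _ this, of "(r, \<tau>, v, s)"] show ?thesis
    by (simp add: sup_norm4_def)
qed

theorem lemma2p6:
  fixes f :: "real \<Rightarrow> real \<Rightarrow> real \<Rightarrow> real \<Rightarrow> real"
    and fbar :: "real \<Rightarrow> real \<Rightarrow> real"
    and \<kappa> \<epsilon> c t :: real
    and u ubar :: "real \<Rightarrow> real"
  assumes cont: "continuous_on UNIV (\<lambda>(r, \<tau>, v, s). f r \<tau> v s)"
    and bdd: "bounded (range (\<lambda>(r, \<tau>, v, s). f r \<tau> v s))"
    and lip: "\<kappa>-lipschitz_on UNIV (\<lambda>(r, \<tau>, v, s). f r \<tau> v s)"
    and per_r: "\<And>r \<tau> v s. f (r + 1) \<tau> v s = f r \<tau> v s"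
    and per_tau: "\<And>r \<tau> v s. f r (\<tau> + 1) v s = f r \<tau> v s"
    and mono_u: "\<And>r \<tau> v w s. v \<le> w \<Longrightarrow> f r \<tau> w s \<le> f r \<tau> v s"
    and fbar_def: "\<And>u0 t0 c0 s U. s \<ge> 0 \<Longrightarrow> (\<And>e. e > 0 \<Longrightarrow>
                solves_ivp (U e) (\<lambda>s y. f (y / e) (s / e) u0 t0) c0) \<Longrightarrow>
              ((\<lambda>e. U e s) \<longlongrightarrow> c0 + fbar u0 t0 * s) (at_right 0)"
    and ubar: "solves_ivp ubar (\<lambda>s y. fbar y s) c"
    and eps: "\<epsilon> > 0"
    and u: "solves_ivp u (\<lambda>s y. f (y / \<epsilon>) (s / \<epsilon>) y s) c"
    and t: "t > 0"
  shows "\<bar>u t - ubar t\<bar> \<le> 2 * sup_norm4 f * t"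
proof -
  note f_le = abs_le_sup_norm4[OF bdd]
  have fbar_le: "\<bar>fbar u0 t0\<bar> \<le> sup_norm4 f" for u0 t0
  proof -
    have "\<forall>e. \<exists>y. e > 0 \<longrightarrow> solves_ivp y (\<lambda>s x. f (x / e) (s / e) u0 t0) 0"
      using solves_ivp_exists_rescaled[OF cont lip f_le] by blast
    from choice[OF this] obtain U where U: "\<And>e. e > 0 \<Longrightarrow> solves_ivp (U e) (\<lambda>s x. f (x / e) (s / e) u0 t0) 0"
      by blast
    have lim: "((\<lambda>e. U e 1) \<longlongrightarrow> fbar u0 t0) (at_right 0)"
      using fbar_def[of 1 U u0 t0 0] U by simp
    show ?thesis
      using U f_le lim by (rule tendsto_solves_ivp_abs_le)
  qed
  have "\<bar>u t - c\<bar> \<le> sup_norm4 f * t"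
    by (rule solves_ivp_displacement_le[OF u f_le]) (use t in simp)
  moreover have "\<bar>ubar t - c\<bar> \<le> sup_norm4 f * t"
    by (rule solves_ivp_displacement_le[OF ubar fbar_le]) (use t in simp)
  ultimately show ?thesis
    by linarith
qed

end
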